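(* Let $N$ be a simple-$\mathcal F$-divisible $R$-module which is supplemented. Then: (a) $N$ is hollow; (b) for every Artinian submodule $V\subsetneq N$ there exists $\mathfrak a_0\in\mathcal F$ with $\mathfrak a_0V=0$, and there is an epimorphism $N/V\twoheadrightarrow N$; (c) if moreover every submodule of $N$ is supplemented, then every nonzero factor module of $N$ is again simple-$\mathcal F$-divisible.
   Context: Throughout, $R$ is a commutative Noetherian local ring, and $\mathcal F$ is a Gabriel topology on $R$: a nonempty set of ideals of $R$ such that (1) if $\mathfrak a\in\mathcal F$ and $\mathfrak a\subseteq\mathfrak b$ then $\mathfrak b\in\mathcal F$; (2) if $\mathfrak a,\mathfrak b\in\mathcal F$ then $\mathfrak a\cap\mathfrak b\in\mathcal F$; (3) if $\mathfrak b$ is an ideal and there is $\mathfrak a\in\mathcal F$ with $(\mathfrak b:r)\in\mathcal F$ for all $r\in\mathfrak a$, then $\mathfrak b\in\mathcal F$. A module $X$ is $\mathcal F$-divisible if $\mathfrak aX=X$ for all $\mathfrak a\in\mathcal F$. $N$ is simple-$\mathcal F$-divisible if $N\ne0$, $N$ is $\mathcal F$-divisible, and no submodule $0\neq V\subsetneq N$ is $\mathcal F$-divisible. A module $N$ is supplemented if for every submodule $V\subseteq N$ there is a submodule $W$ (a supplement of $V$) which is minimal among submodules with $V+W=N$. A module $N\ne0$ is hollow (couniform) if every proper submodule $V\subsetneq N$ is small in $N$, i.e. $V+W=N$ implies $W=N$. *)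

theory Defs
  imports Main "HOL.Modules"
begin

definition is_ideal :: "'a::comm_ring_1 set \<Rightarrow> bool" where
  "is_ideal I \<longleftrightarrow> 0 \<in> I \<and> (\<forall>x\<in>I. \<forall>y\<in>I. x + y \<in> I) \<and> (\<forall>r. \<forall>x\<in>I. r * x \<in> I)"

definition noetherian_ring :: "'a::comm_ring_1 itself \<Rightarrow> bool" where
  "noetherian_ring _ \<longleftrightarrow>
     (\<forall>I::'a set. is_ideal I \<longrightarrow> (\<exists>S. finite S \<and> I = module.span (*) S))"

definition maximal_ideal :: "'a::comm_ring_1 set \<Rightarrow> bool" where
  "maximal_ideal m \<longleftrightarrow> is_ideal m \<and> m \<noteq> UNIV \<and>
     (\<forall>J. is_ideal J \<and> m \<subseteq> J \<longrightarrow> J = m \<or> J = UNIV)"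

definition local_ring :: "'a::comm_ring_1 itself \<Rightarrow> bool" where
  "local_ring _ \<longleftrightarrow> (\<exists>!m::'a set. maximal_ideal m)"

definition colon_ideal :: "'a::comm_ring_1 set \<Rightarrow> 'a \<Rightarrow> 'a set" where
  "colon_ideal b r = {s. s * r \<in> b}"

definition gabriel_topology :: "'a::comm_ring_1 set set \<Rightarrow> bool" where
  "gabriel_topology F \<longleftrightarrow>
     F \<noteq> {} \<and> (\<forall>a\<in>F. is_ideal a) \<and>
     (\<forall>a b. a \<in> F \<and> is_ideal b \<and> a \<subseteq> b \<longrightarrow> b \<in> F) \<and>
     (\<forall>a\<in>F. \<forall>b\<in>F. a \<inter> b \<in> F) \<and>
     (\<forall>b. is_ideal b \<and> (\<exists>a\<in>F. \<forall>r\<in>a. colon_ideal b r \<in> F) \<longrightarrow> b \<in> F)"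

text \<open>All modules are submodules (sets) of an ambient R-module given by
  the scalar multiplication sc on the type 'm.\<close>

definition msum :: "'m::ab_group_add set \<Rightarrow> 'm set \<Rightarrow> 'm set" where
  "msum V W = {v + w | v w. v \<in> V \<and> w \<in> W}"

definition ideal_mult ::
  "('a::comm_ring_1 \<Rightarrow> 'm::ab_group_add \<Rightarrow> 'm) \<Rightarrow> 'a set \<Rightarrow> 'm set \<Rightarrow> 'm set" where
  "ideal_mult sc a V = module.span sc {sc r v | r v. r \<in> a \<and> v \<in> V}"

definition F_divisible ::
  "('a::comm_ring_1 \<Rightarrow> 'm::ab_group_add \<Rightarrow> 'm) \<Rightarrow> 'a set set \<Rightarrow> 'm set \<Rightarrow> bool" where
  "F_divisible sc F X \<longleftrightarrow> (\<forall>a\<in>F. ideal_mult sc a X = X)"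

definition simple_F_divisible ::
  "('a::comm_ring_1 \<Rightarrow> 'm::ab_group_add \<Rightarrow> 'm) \<Rightarrow> 'a set set \<Rightarrow> 'm set \<Rightarrow> bool" where
  "simple_F_divisible sc F N \<longleftrightarrow> N \<noteq> {0} \<and> F_divisible sc F N \<and>
     (\<forall>V. module.subspace sc V \<and> V \<subseteq> N \<and> V \<noteq> {0} \<and> V \<noteq> N \<longrightarrow> \<not> F_divisible sc F V)"

text \<open>Factor modules W/V (for submodules V \<subseteq> W): the submodules of W/V are
  the U/V with V \<subseteq> U \<subseteq> W, and a(U/V) = (aU + V)/V. Hence U/V is
  F-divisible iff aU + V = U for all a in F, and U/V \<noteq> 0 iff V \<noteq> U.\<close>
definition F_divisible_quot ::
  "('a::comm_ring_1 \<Rightarrow> 'm::ab_group_add \<Rightarrow> 'm) \<Rightarrow> 'a set set \<Rightarrow> 'm set \<Rightarrow> 'm set \<Rightarrow> bool" where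
  "F_divisible_quot sc F V U \<longleftrightarrow> (\<forall>a\<in>F. msum (ideal_mult sc a U) V = U)"

definition simple_F_divisible_quot ::
  "('a::comm_ring_1 \<Rightarrow> 'm::ab_group_add \<Rightarrow> 'm) \<Rightarrow> 'a set set \<Rightarrow> 'm set \<Rightarrow> 'm set \<Rightarrow> bool" where
  "simple_F_divisible_quot sc F V N \<longleftrightarrow> V \<noteq> N \<and> F_divisible_quot sc F V N \<and>
     (\<forall>U. module.subspace sc U \<and> V \<subseteq> U \<and> U \<subseteq> N \<and> U \<noteq> V \<and> U \<noteq> N
          \<longrightarrow> \<not> F_divisible_quot sc F V U)"

definition is_supplement ::
  "('a::comm_ring_1 \<Rightarrow> 'm::ab_group_add \<Rightarrow> 'm) \<Rightarrow> 'm set \<Rightarrow> 'm set \<Rightarrow> 'm set \<Rightarrow> bool" where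
  "is_supplement sc N V W \<longleftrightarrow> module.subspace sc W \<and> W \<subseteq> N \<and> msum V W = N \<and>
     (\<forall>W'. module.subspace sc W' \<and> W' \<subseteq> W \<and> msum V W' = N \<longrightarrow> W' = W)"

definition supplemented ::
  "('a::comm_ring_1 \<Rightarrow> 'm::ab_group_add \<Rightarrow> 'm) \<Rightarrow> 'm set \<Rightarrow> bool" where
  "supplemented sc N \<longleftrightarrow>
     (\<forall>V. module.subspace sc V \<and> V \<subseteq> N \<longrightarrow> (\<exists>W. is_supplement sc N V W))"

definition small_in ::
  "('a::comm_ring_1 \<Rightarrow> 'm::ab_group_add \<Rightarrow> 'm) \<Rightarrow> 'm set \<Rightarrow> 'm set \<Rightarrow> bool" where
  "small_in sc V N \<longleftrightarrow>
     (\<forall>W. module.subspace sc W \<and> W \<subseteq> N \<and> msum V W = N \<longrightarrow> W = N)"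

definition hollow ::
  "('a::comm_ring_1 \<Rightarrow> 'm::ab_group_add \<Rightarrow> 'm) \<Rightarrow> 'm set \<Rightarrow> bool" where
  "hollow sc N \<longleftrightarrow> N \<noteq> {0} \<and>
     (\<forall>V. module.subspace sc V \<and> V \<subseteq> N \<and> V \<noteq> N \<longrightarrow> small_in sc V N)"

definition artinian ::
  "('a::comm_ring_1 \<Rightarrow> 'm::ab_group_add \<Rightarrow> 'm) \<Rightarrow> 'm set \<Rightarrow> bool" where
  "artinian sc V \<longleftrightarrow>
     (\<forall>f::nat \<Rightarrow> 'm set. (\<forall>n. module.subspace sc (f n) \<and> f n \<subseteq> V \<and> f (Suc n) \<subseteq> f n)
        \<longrightarrow> (\<exists>k. \<forall>n\<ge>k. f n = f k))"

definition linear_on ::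
  "('a::comm_ring_1 \<Rightarrow> 'm::ab_group_add \<Rightarrow> 'm) \<Rightarrow> 'm set \<Rightarrow> ('m \<Rightarrow> 'm) \<Rightarrow> bool" where
  "linear_on sc N f \<longleftrightarrow> (\<forall>x\<in>N. \<forall>y\<in>N. f (x + y) = f x + f y) \<and> (\<forall>r. \<forall>x\<in>N. f (sc r x) = sc r (f x))"

text \<open>An epimorphism N/V \<rightarrow>> N is the same as an R-linear surjection N \<rightarrow> N
  vanishing on V (universal property of the quotient).\<close>
definition epi_from_quotient ::
  "('a::comm_ring_1 \<Rightarrow> 'm::ab_group_add \<Rightarrow> 'm) \<Rightarrow> 'm set \<Rightarrow> 'm set \<Rightarrow> bool" where
  "epi_from_quotient sc N V \<longleftrightarrow>
     (\<exists>f. linear_on sc N f \<and> f ` N = N \<and> (\<forall>v\<in>V. f v = 0))"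

end

theory Submission
  imports Defs
begin

text \<open>If \<open>U/V\<close> is \<open>F\<close>-divisible, then so is every supplement \<open>W\<close> of \<open>V\<close> in \<open>U\<close>:
  for \<open>a \<in> F\<close>, \<open>V + aW = U\<close> and \<open>aW \<subseteq> W\<close> force \<open>aW = W\<close> by minimality of \<open>W\<close>.
  Inside the simple-\<open>F\<close>-divisible module \<open>N\<close> such a supplement is nonzero whenever
  \<open>V \<noteq> U\<close>, hence equals \<open>N\<close>; this gives hollowness (\<open>U = N\<close>) and the simplicity of
  the factor modules (\<open>U \<subset> N\<close>). For an Artinian \<open>V \<subset> N\<close> pick \<open>a \<in> F\<close> with \<open>aV\<close>
  minimal; since \<open>F\<close> is closed under products of ideals, \<open>aV\<close> is \<open>F\<close>-divisible, so \<open>aV = 0\<close>.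
  Writing \<open>a = (s\<^sub>1, \<dots>, s\<^sub>n)\<close> (Noetherianity), \<open>N = aN = s\<^sub>1N + \<dots> + s\<^sub>nN\<close>, and
  hollowness gives some \<open>s\<^sub>iN = N\<close>: multiplication by \<open>s\<^sub>i\<close> is an epimorphism
  \<open>N \<rightarrow> N\<close> killing \<open>V\<close>.\<close>

lemma module_mult: "module ((*) :: 'a::comm_ring_1 \<Rightarrow> 'a \<Rightarrow> 'a)"
  by unfold_locales (auto simp: algebra_simps)

lemma is_ideal_iff_subspace:
  "is_ideal I \<longleftrightarrow> module.subspace ((*) :: 'a::comm_ring_1 \<Rightarrow> 'a \<Rightarrow> 'a) I"
  unfolding is_ideal_def module.subspace_def[OF module_mult] by auto

lemma msumI: "a \<in> A \<Longrightarrow> b \<in> B \<Longrightarrow> x = a + b \<Longrightarrow> x \<in> msum A B"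
  unfolding msum_def by blast

lemma msum_mono: "A \<subseteq> A' \<Longrightarrow> B \<subseteq> B' \<Longrightarrow> msum A B \<subseteq> msum A' B'"
  unfolding msum_def by blast

definition ideal_prod :: "'a::comm_ring_1 set \<Rightarrow> 'a set \<Rightarrow> 'a set" where
  "ideal_prod a b = module.span (*) {x * y | x y. x \<in> a \<and> y \<in> b}"

lemma gabriel_topology_nonempty: "gabriel_topology F \<Longrightarrow> F \<noteq> {}"
  unfolding gabriel_topology_def by (elim conjE)

lemma gabriel_topology_is_ideal: "gabriel_topology F \<Longrightarrow> a \<in> F \<Longrightarrow> is_ideal a"
  unfolding gabriel_topology_def by (elim conjE) (rule bspec)

lemma colon_ideal_is_ideal:
  assumes "is_ideal b" shows "is_ideal (colon_ideal b r)"
  using assms unfolding is_ideal_def colon_ideal_def by (auto simp: distrib_right mult.assoc)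

lemma gabriel_topology_ideal_prod:
  assumes F: "gabriel_topology F" and a: "a \<in> F" and b: "b \<in> F"
  shows "ideal_prod a b \<in> F"
proof -
  have upward: "\<And>c d. c \<in> F \<Longrightarrow> is_ideal d \<Longrightarrow> c \<subseteq> d \<Longrightarrow> d \<in> F"
    and colon: "\<And>d. is_ideal d \<Longrightarrow> \<exists>c\<in>F. \<forall>r\<in>c. colon_ideal d r \<in> F \<Longrightarrow> d \<in> F"
    using F unfolding gabriel_topology_def by (elim conjE; blast)+
  have P: "is_ideal (ideal_prod a b)"
    unfolding ideal_prod_def is_ideal_iff_subspace by (rule module.subspace_span[OF module_mult])
  have "colon_ideal (ideal_prod a b) r \<in> F" if r: "r \<in> b" for r
  proof (rule upward[OF a colon_ideal_is_ideal[OF P]])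
    show "a \<subseteq> colon_ideal (ideal_prod a b) r"
      unfolding colon_ideal_def ideal_prod_def using r by (auto intro!: module.span_base[OF module_mult])
  qed
  then show ?thesis using b by (intro colon[OF P]) blast
qed

context module begin

lemma subspace_msum:
  assumes "subspace A" "subspace B" shows "subspace (msum A B)"
proof (rule subspaceI)
  show "0 \<in> msum A B" using assms subspace_0 by (intro msumI[of 0 _ 0]) auto
next
  fix x y assume "x \<in> msum A B" "y \<in> msum A B"
  then obtain a b a' b' where "x = a + b" "y = a' + b'" "a \<in> A" "b \<in> B" "a' \<in> A" "b' \<in> B"
    unfolding msum_def by auto
  then show "x + y \<in> msum A B"
    using assms subspace_add by (intro msumI[of "a + a'" _ "b + b'"]) (auto simp: algebra_simps)
next
  fix c x assume "x \<in> msum A B"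
  then obtain a b where "x = a + b" "a \<in> A" "b \<in> B" unfolding msum_def by auto
  then show "c *s x \<in> msum A B"
    using assms subspace_scale by (intro msumI[of "c *s a" _ "c *s b"]) (auto simp: scale_right_distrib)
qed

lemma msum_zero_right: "subspace A \<Longrightarrow> msum A {0} = A"
  unfolding msum_def by auto

lemma msum_absorb_right:
  assumes "subspace A" "subspace B" "B \<subseteq> A" shows "msum A B = A"
proof
  show "msum A B \<subseteq> A" unfolding msum_def using assms subspace_add by blast
  show "A \<subseteq> msum A B" using subspace_0[OF assms(2)] by (auto intro: msumI[of _ _ 0])
qed

lemma span_Un_subspace:
  assumes "subspace A" shows "span (A \<union> B) = msum A (span B)"
proof -
  have "span A = A" using assms by simp
  then show ?thesis unfolding span_Un msum_def by (simp only:)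
qed

lemma subspace_ideal_mult: "subspace (ideal_mult scale a V)"
  unfolding ideal_mult_def by simp

lemma ideal_mult_subset: "subspace V \<Longrightarrow> ideal_mult scale a V \<subseteq> V"
  unfolding ideal_mult_def by (rule span_minimal) (auto intro: subspace_scale)

lemma scale_in_ideal_mult: "r \<in> a \<Longrightarrow> v \<in> V \<Longrightarrow> r *s v \<in> ideal_mult scale a V"
  unfolding ideal_mult_def by (rule span_base) auto

lemma ideal_mult_subset_subspace:
  assumes "subspace T" "\<And>r v. r \<in> a \<Longrightarrow> v \<in> V \<Longrightarrow> r *s v \<in> T"
  shows "ideal_mult scale a V \<subseteq> T"
  unfolding ideal_mult_def using assms by (intro span_minimal) auto

lemma ideal_mult_msum_subset:
  assumes "subspace A"
  shows "ideal_mult scale a (msum A B) \<subseteq> msum A (ideal_mult scale a B)"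
proof (rule ideal_mult_subset_subspace)
  show "subspace (msum A (ideal_mult scale a B))"
    by (rule subspace_msum[OF assms subspace_ideal_mult])
  fix r x assume "r \<in> a" "x \<in> msum A B"
  then obtain u w where "x = u + w" "u \<in> A" "w \<in> B" unfolding msum_def by auto
  with \<open>r \<in> a\<close> show "r *s x \<in> msum A (ideal_mult scale a B)"
    using subspace_scale[OF assms] scale_in_ideal_mult
    by (intro msumI[of "r *s u" _ "r *s w"]) (auto simp: scale_right_distrib)
qed

lemma scale_span_mem:
  assumes T: "subspace T" and r: "r \<in> module.span (*) S" and S: "\<And>s. s \<in> S \<Longrightarrow> s *s v \<in> T"
  shows "r *s v \<in> T"
proof -
  have "module.subspace (*) ((\<lambda>p. p *s v) -` T)"
    using T by (rule module_hom.subspace_vimage[OF module_hom_scale_left])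
  then have "module.span (*) S \<subseteq> (\<lambda>p. p *s v) -` T"
    using S by (intro module.span_minimal[OF module_mult]) auto
  then show ?thesis using r by blast
qed

lemma ideal_mult_ideal_prod_subset:
  "ideal_mult scale (ideal_prod a b) V \<subseteq> ideal_mult scale a (ideal_mult scale b V)"
proof (rule ideal_mult_subset_subspace[OF subspace_ideal_mult])
  fix r v assume r: "r \<in> ideal_prod a b" and v: "v \<in> V"
  show "r *s v \<in> ideal_mult scale a (ideal_mult scale b V)"
  proof (rule scale_span_mem[OF subspace_ideal_mult])
    show "r \<in> module.span (*) {x * y | x y. x \<in> a \<and> y \<in> b}" using r by (simp add: ideal_prod_def)
    fix s assume "s \<in> {x * y | x y. x \<in> a \<and> y \<in> b}"
    then obtain x y where "s = x * y" "x \<in> a" "y \<in> b" by blast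
    then show "s *s v \<in> ideal_mult scale a (ideal_mult scale b V)"
      using v by (metis scale_scale scale_in_ideal_mult)
  qed
qed

lemma supplement_ideal_mult_eq:
  assumes V: "subspace V" and W: "is_supplement scale U V W"
    and aU: "msum (ideal_mult scale a U) V = U"
  shows "ideal_mult scale a W = W"
proof -
  from W have Ws: "subspace W" and VW: "msum V W = U"
    and minimal: "\<And>W'. subspace W' \<Longrightarrow> W' \<subseteq> W \<Longrightarrow> msum V W' = U \<Longrightarrow> W' = W"
    unfolding is_supplement_def by auto
  have aW: "ideal_mult scale a W \<subseteq> W" by (rule ideal_mult_subset[OF Ws])
  have "msum V (ideal_mult scale a W) = U"
  proof
    show "msum V (ideal_mult scale a W) \<subseteq> U"
      using msum_mono[OF order_refl aW] VW by blast
    show "U \<subseteq> msum V (ideal_mult scale a W)"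
    proof
      fix x assume "x \<in> U"
      then have "x \<in> msum (ideal_mult scale a U) V" using aU by simp
      then obtain y v where xy: "x = y + v" "y \<in> ideal_mult scale a U" "v \<in> V"
        unfolding msum_def by auto
      from xy(2) ideal_mult_msum_subset[OF V, of a W] VW obtain v' w where
        "y = v' + w" "v' \<in> V" "w \<in> ideal_mult scale a W" unfolding msum_def by auto
      with xy show "x \<in> msum V (ideal_mult scale a W)"
        using subspace_add[OF V] by (intro msumI[of "v' + v" _ w]) (auto simp: algebra_simps)
    qed
  qed
  then show ?thesis using minimal[OF subspace_ideal_mult aW] by simp
qed

lemma supplement_eq_simple_F_divisible:
  assumes N: "simple_F_divisible scale F N"
    and V: "subspace V" "V \<noteq> U" and U: "U \<subseteq> N" "F_divisible_quot scale F V U"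
    and W: "is_supplement scale U V W"
  shows "W = N"
proof -
  have Ws: "subspace W" "W \<subseteq> U" "msum V W = U" using W by (simp_all add: is_supplement_def)
  have "F_divisible scale F W"
    unfolding F_divisible_def
  proof
    fix a assume "a \<in> F"
    then have "msum (ideal_mult scale a U) V = U" using U(2) by (simp add: F_divisible_quot_def)
    then show "ideal_mult scale a W = W" by (rule supplement_ideal_mult_eq[OF V(1) W])
  qed
  moreover have "W \<noteq> {0}" using Ws(3) V msum_zero_right by auto
  moreover have "W \<subseteq> N" using Ws(2) U(1) by (rule order_trans)
  ultimately show ?thesis using N Ws(1) by (auto simp: simple_F_divisible_def)
qed

lemma F_divisible_quot_if_F_divisible:
  "F_divisible scale F N \<Longrightarrow> subspace N \<Longrightarrow> subspace V \<Longrightarrow> V \<subseteq> N \<Longrightarrow> F_divisible_quot scale F V N"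
  unfolding F_divisible_def F_divisible_quot_def by (simp add: msum_absorb_right)

lemma hollow_if_simple_F_divisible_supplemented:
  assumes N: "subspace N" "simple_F_divisible scale F N" and supp: "supplemented scale N"
  shows "hollow scale N"
  unfolding hollow_def small_in_def
proof (intro conjI allI impI)
  show "N \<noteq> {0}" using N(2) by (simp add: simple_F_divisible_def)
  fix V W assume V: "subspace V \<and> V \<subseteq> N \<and> V \<noteq> N" and W: "subspace W \<and> W \<subseteq> N \<and> msum V W = N"
  obtain S where S: "is_supplement scale N V S" using supp V by (auto simp: supplemented_def)
  have "F_divisible_quot scale F V N"
    using N V by (intro F_divisible_quot_if_F_divisible) (simp_all add: simple_F_divisible_def)
  then have "S = N" using supplement_eq_simple_F_divisible[OF N(2) _ _ order_refl _ S] V by simp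
  then show "W = N" using S W by (simp add: is_supplement_def)
qed

lemma simple_F_divisible_quot_if_supplemented:
  assumes N: "subspace N" "simple_F_divisible scale F N"
    and supp: "\<forall>U. subspace U \<and> U \<subseteq> N \<longrightarrow> supplemented scale U"
    and V: "subspace V" "V \<subseteq> N" "V \<noteq> N"
  shows "simple_F_divisible_quot scale F V N"
proof -
  have "\<not> F_divisible_quot scale F V U"
    if U: "subspace U" "V \<subseteq> U" "U \<subseteq> N" "U \<noteq> V" "U \<noteq> N" for U
  proof
    obtain W where W: "is_supplement scale U V W"
      using supp U(1,2,3) V(1) unfolding supplemented_def by blast
    assume "F_divisible_quot scale F V U"
    then have "W = N" using supplement_eq_simple_F_divisible[OF N(2) V(1) _ U(3) _ W] U(4) by simp
    then show False using W U(3,5) by (auto simp: is_supplement_def)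
  qed
  moreover have "F_divisible_quot scale F V N"
    using N V by (intro F_divisible_quot_if_F_divisible) (simp_all add: simple_F_divisible_def)
  ultimately show ?thesis using V(3) by (simp add: simple_F_divisible_quot_def)
qed

lemma artinian_has_minimal:
  assumes art: "artinian scale V" and "S \<noteq> {}" and sub: "\<forall>X\<in>S. subspace X \<and> X \<subseteq> V"
  shows "\<exists>X\<in>S. \<forall>Y\<in>S. Y \<subseteq> X \<longrightarrow> Y = X"
proof (rule ccontr)
  assume "\<not> ?thesis"
  then have "\<forall>X\<in>S. \<exists>Y. Y \<in> S \<and> Y \<subset> X" by blast
  then obtain g where g: "\<And>X. X \<in> S \<Longrightarrow> g X \<in> S \<and> g X \<subset> X" by metis
  obtain X0 where "X0 \<in> S" using \<open>S \<noteq> {}\<close> by blast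
  define f where "f n = (g ^^ n) X0" for n
  have fS: "f n \<in> S" for n by (induct n) (use \<open>X0 \<in> S\<close> g in \<open>auto simp: f_def\<close>)
  have dec: "f (Suc n) \<subset> f n" for n using g[OF fS[of n]] by (simp add: f_def)
  then obtain k where "\<forall>n\<ge>k. f n = f k"
    using art sub fS unfolding artinian_def by (metis less_imp_le)
  then show False using dec[of k] by (metis le_SucI order_refl less_irrefl)
qed

lemma artinian_ideal_mult_zero:
  assumes F: "gabriel_topology F" and N: "simple_F_divisible scale F N"
    and V: "subspace V" "V \<subseteq> N" "V \<noteq> N" and art: "artinian scale V"
  shows "\<exists>a\<in>F. ideal_mult scale a V = {0}"
proof -
  let ?S = "(\<lambda>c. ideal_mult scale c V) ` F"
  have "?S \<noteq> {}" using gabriel_topology_nonempty[OF F] by simp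
  moreover have "\<forall>X\<in>?S. subspace X \<and> X \<subseteq> V"
    by (simp add: subspace_ideal_mult ideal_mult_subset V(1))
  ultimately have "\<exists>X\<in>?S. \<forall>Y\<in>?S. Y \<subseteq> X \<longrightarrow> Y = X"
    by (rule artinian_has_minimal[OF art])
  then obtain X where X: "X \<in> ?S" and X_minimal: "\<forall>Y\<in>?S. Y \<subseteq> X \<longrightarrow> Y = X"
    by (elim bexE)
  from X obtain a where a: "a \<in> F" and "X = ideal_mult scale a V" by (elim imageE)
  then have minimal: "\<And>c. c \<in> F \<Longrightarrow> ideal_mult scale c V \<subseteq> ideal_mult scale a V
                      \<Longrightarrow> ideal_mult scale c V = ideal_mult scale a V"
    using X_minimal by blast
  let ?X = "ideal_mult scale a V"
  have "ideal_mult scale b ?X = ?X" if b: "b \<in> F" for b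
  proof -
    have "ideal_mult scale (ideal_prod b a) V \<subseteq> ideal_mult scale b ?X"
      by (rule ideal_mult_ideal_prod_subset)
    moreover have "ideal_mult scale b ?X \<subseteq> ?X"
      by (rule ideal_mult_subset[OF subspace_ideal_mult])
    ultimately show ?thesis
      using minimal[OF gabriel_topology_ideal_prod[OF F b a]] by blast
  qed
  moreover have "?X \<subseteq> N" "?X \<noteq> N" using ideal_mult_subset[OF V(1), of a] V by auto
  ultimately have "?X = {0}"
    using N subspace_ideal_mult unfolding simple_F_divisible_def F_divisible_def by blast
  then show ?thesis using a by blast
qed

lemma subspace_image_scale: "subspace N \<Longrightarrow> subspace ((\<lambda>x. s *s x) ` N)"
  by (rule module_hom.subspace_image[OF module_hom_scale_self])

lemma hollowD:
  "hollow scale N \<Longrightarrow> subspace V \<Longrightarrow> V \<subseteq> N \<Longrightarrow> V \<noteq> N \<Longrightarrow> subspace W \<Longrightarrow> W \<subseteq> N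
    \<Longrightarrow> msum V W = N \<Longrightarrow> W = N"
  unfolding hollow_def small_in_def by blast

lemma hollow_finite_sum:
  assumes hollow: "hollow scale N" and "finite T"
    and T: "\<And>X. X \<in> T \<Longrightarrow> subspace X \<and> X \<subseteq> N" and sum: "span (\<Union>T) = N"
  shows "N \<in> T"
  using \<open>finite T\<close> T sum
proof (induction T rule: finite_induct)
  case empty
  then show ?case using hollow unfolding hollow_def by simp
next
  case (insert X T)
  have "span (\<Union>T) \<subseteq> N" using insert.prems by (intro span_minimal) auto
  moreover have "msum X (span (\<Union>T)) = N"
    using insert.prems span_Un_subspace[of X "\<Union>T"] by simp
  ultimately have "X = N \<or> span (\<Union>T) = N"
    using hollowD[OF hollow] insert.prems(1)[of X] by auto
  moreover have "N \<in> T" if "span (\<Union>T) = N"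
    using insert.IH[OF _ that] insert.prems(1) by (metis insertCI)
  ultimately show ?case by blast
qed

lemma epi_from_quotient_if_ideal_mult_zero:
  assumes noeth: "noetherian_ring TYPE('a)" and F: "gabriel_topology F"
    and N: "subspace N" "simple_F_divisible scale F N" "hollow scale N"
    and a: "a \<in> F" and aV: "ideal_mult scale a V = {0}"
  shows "epi_from_quotient scale N V"
proof -
  obtain S where "finite S" and aS: "a = module.span (*) S"
    using noeth gabriel_topology_is_ideal[OF F a] unfolding noetherian_ring_def by blast
  have aN: "ideal_mult scale a N = N"
    using N(2) a by (simp add: simple_F_divisible_def F_divisible_def)
  let ?sN = "\<lambda>s. (\<lambda>x. s *s x) ` N"
  have sN_sub: "subspace (?sN s) \<and> ?sN s \<subseteq> N" for s
    using subspace_image_scale[OF N(1)] subspace_scale[OF N(1)] by blast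
  have "span (\<Union> (?sN ` S)) = N"
  proof
    show "span (\<Union> (?sN ` S)) \<subseteq> N" using N(1) sN_sub by (intro span_minimal) auto
    have "ideal_mult scale a N \<subseteq> span (\<Union> (?sN ` S))"
    proof (rule ideal_mult_subset_subspace[OF subspace_span])
      fix r v assume r: "r \<in> a" and v: "v \<in> N"
      show "r *s v \<in> span (\<Union> (?sN ` S))"
      proof (rule scale_span_mem[OF subspace_span])
        show "r \<in> module.span (*) S" using r aS by simp
        show "s *s v \<in> span (\<Union> (?sN ` S))" if "s \<in> S" for s
          using that v by (auto intro: span_base)
      qed
    qed
    then show "N \<subseteq> span (\<Union> (?sN ` S))" using aN by simp
  qed
  then have "N \<in> ?sN ` S"
    using \<open>finite S\<close> sN_sub by (intro hollow_finite_sum[OF N(3)]) auto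
  then obtain s where s: "s \<in> S" and sN: "?sN s = N" by (elim imageE) simp
  have "s \<in> a" unfolding aS using s by (rule module.span_base[OF module_mult])
  then have "\<forall>v\<in>V. s *s v = 0" using scale_in_ideal_mult aV by blast
  moreover have "linear_on scale N (\<lambda>x. s *s x)"
    unfolding linear_on_def by (simp add: scale_right_distrib scale_left_commute mult.commute)
  ultimately show ?thesis unfolding epi_from_quotient_def using sN by blast
qed

end

theorem lemma3p1:
  fixes sc :: "'a::comm_ring_1 \<Rightarrow> 'm::ab_group_add \<Rightarrow> 'm"
    and F :: "'a set set" and N :: "'m set"
  assumes "noetherian_ring TYPE('a)" and "local_ring TYPE('a)"
    and "gabriel_topology F"
    and "module sc"
    and "module.subspace sc N"
    and "simple_F_divisible sc F N"
    and "supplemented sc N"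
  shows "hollow sc N \<and>
    (\<forall>V. module.subspace sc V \<and> V \<subseteq> N \<and> V \<noteq> N \<and> artinian sc V \<longrightarrow>
           (\<exists>a0\<in>F. ideal_mult sc a0 V = {0}) \<and> epi_from_quotient sc N V) \<and>
    ((\<forall>U. module.subspace sc U \<and> U \<subseteq> N \<longrightarrow> supplemented sc U) \<longrightarrow>
           (\<forall>V. module.subspace sc V \<and> V \<subseteq> N \<and> V \<noteq> N \<longrightarrow> simple_F_divisible_quot sc F V N))"
proof -
  interpret module sc by fact
  have hollow: "hollow sc N"
    using assms(5-7) by (rule hollow_if_simple_F_divisible_supplemented)
  moreover have "(\<exists>a\<in>F. ideal_mult sc a V = {0}) \<and> epi_from_quotient sc N V"
    if "subspace V" "V \<subseteq> N" "V \<noteq> N" "artinian sc V" for V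
    using artinian_ideal_mult_zero[OF assms(3,6) that]
      epi_from_quotient_if_ideal_mult_zero[OF assms(1,3,5,6) hollow] by blast
  moreover have "simple_F_divisible_quot sc F V N"
    if "\<forall>U. subspace U \<and> U \<subseteq> N \<longrightarrow> supplemented sc U" "subspace V" "V \<subseteq> N" "V \<noteq> N" for V
    using simple_F_divisible_quot_if_supplemented[OF assms(5,6) that] .
  ultimately show ?thesis by blast
qed

end
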